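(* Let $\diamond$ be a weak independence on the analysis instance $\mathcal{D}$ and let $\prec_s$ be the size order. The feasible prefix $\mathcal{P}^{\prec_s}_{\mathcal{D},\diamond}$ of the unfolding $\mathcal{U}_{\mathcal{D},\diamond}$ is $\mathcal{D}$-complete.
   Context: An analysis instance $\mathcal{D}=\langle D,\sqsubseteq,F,d_0\rangle$ consists of a lattice $\langle D,\sqsubseteq,\sqcup,\sqcap\rangle$ with least element $\bot$, monotone bottom-strict transformers $F$, and initial element $d_0$. For $\sigma=f_1\ldots f_m$, $\mathrm{state}(\sigma)=(f_m\circ\cdots\circ f_1)(d_0)$; $\mathrm{reach}(\mathcal{D})$ is the set of reachable elements. A relation $\diamond\subseteq F\times F$ is a weak independence if it is symmetric, irreflexive, and $f\diamond f'$ implies $f(f'(d))=f'(f(d))$ for every $d\in\mathrm{reach}(\mathcal{D})$. A labelled prime event structure (PES) is $\langle E,<,\#,h\rangle$ with $<$ a strict partial order with finite down-sets, $\#$ a symmetric irreflexive conflict relation inherited along $<$, and a labelling $h$. A configuration is a finite causally closed, conflict-free set of events; $[e]=\{e'\colon e'<e\}\cup\{e\}$ is the local configuration of $e$. The interleavings $\mathrm{inter}(C)$ are the label sequences of linearizations of $C$ respecting $<$, and $\mathrm{state}(C)$ is the greatest lower bound (meet) in $D$ of $\{\mathrm{state}(\sigma)\colon\sigma\in\mathrm{inter}(C)\}$. The unfolding $\mathcal{U}_{\mathcal{D},\diamond}$ is obtained from the empty PES by repeatedly adding events $e=\langle f,C\rangle$ where $C$ is a configuration, $f$ is enabled (not yielding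 $\bot$) at $\mathrm{state}(C)$ and $\neg(f\diamond h(e'))$ for every $<$-maximal $e'\in C$, setting $e'<e$ for $e'\in C$, $e'\# e$ for other events $e'\notin C$ with $\neg(f\diamond h(e'))$, and $h(e)=f$, until saturation. Prefixes of a PES are sub-PESs closed under causal predecessors with the projected relations. A strategy is a strict partial order $\prec$ on finite configurations of $\mathcal{U}_{\mathcal{D},\diamond}$ with $C\subsetneq C'\Rightarrow C\prec C'$. An event $e$ is $\prec$-feasible if no causal predecessor of $e$ is a $\prec$-cutoff; a $\prec$-feasible event $e$ is a $\prec$-cutoff if there is a $\prec$-feasible event $e'$ with $[e']\prec[e]$ and $\mathrm{state}([e])\sqsubseteq\mathrm{state}([e'])$. The feasible prefix $\mathcal{P}^{\prec}_{\mathcal{D},\diamond}$ is the unique prefix of $\mathcal{U}_{\mathcal{D},\diamond}$ containing exactly the $\prec$-feasible events that are not $\prec$-cutoffs. The size order is $C\prec_s C'$ iff $|C|<|C'|$. A PES is $\mathcal{D}$-complete iff for every $d\in\mathrm{reach}(\mathcal{D})$ there is a configuration $C$ of it with $d\sqsubseteq\mathrm{state}(C)$. *)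

theory Defs
  imports Main "HOL-Library.FSet"
begin

text \<open>An analysis instance is given by a lattice 'd with least element bot
  (type class bounded_lattice_bot), a set F of transformers and an initial
  element d0.\<close>

definition analysis_instance :: "('d::bounded_lattice_bot \<Rightarrow> 'd) set \<Rightarrow> bool" where
  "analysis_instance F \<longleftrightarrow> (\<forall>f\<in>F. mono f \<and> f bot = bot)"

definition seq_state :: "'d \<Rightarrow> ('d \<Rightarrow> 'd) list \<Rightarrow> 'd" where
  "seq_state d0 \<sigma> = foldl (\<lambda>d f. f d) d0 \<sigma>"

definition reach :: "('d \<Rightarrow> 'd) set \<Rightarrow> 'd \<Rightarrow> 'd set" where
  "reach F d0 = {seq_state d0 \<sigma> | \<sigma>. set \<sigma> \<subseteq> F}"

definition weak_indep ::
  "('d \<Rightarrow> 'd) set \<Rightarrow> 'd \<Rightarrow> (('d \<Rightarrow> 'd) \<Rightarrow> ('d \<Rightarrow> 'd) \<Rightarrow> bool) \<Rightarrow> bool" where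
  "weak_indep F d0 indep \<longleftrightarrow>
     (\<forall>f f'. indep f f' \<longrightarrow> f \<in> F \<and> f' \<in> F) \<and>
     (\<forall>f f'. indep f f' \<longrightarrow> indep f' f) \<and>
     (\<forall>f. \<not> indep f f) \<and>
     (\<forall>f f'. indep f f' \<longrightarrow> (\<forall>d\<in>reach F d0. f (f' d) = f' (f d)))"

datatype 'f event = Ev (lab: 'f) (hist: "'f event fset")

definition causes :: "'f event \<Rightarrow> 'f event \<Rightarrow> bool" where
  "causes e' e \<longleftrightarrow> e' |\<in>| hist e"

definition lconf :: "'f event \<Rightarrow> 'f event set" where
  "lconf e = insert e (fset (hist e))"

definition direct_conflict :: "('f \<Rightarrow> 'f \<Rightarrow> bool) \<Rightarrow> 'f event \<Rightarrow> 'f event \<Rightarrow> bool" where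
  "direct_conflict indep a b \<longleftrightarrow>
     a \<noteq> b \<and> \<not> causes a b \<and> \<not> causes b a \<and> \<not> indep (lab a) (lab b)"

definition conflict :: "('f \<Rightarrow> 'f \<Rightarrow> bool) \<Rightarrow> 'f event \<Rightarrow> 'f event \<Rightarrow> bool" where
  "conflict indep a b \<longleftrightarrow>
     (\<exists>a' b'. (a' = a \<or> causes a' a) \<and> (b' = b \<or> causes b' b) \<and> direct_conflict indep a' b')"

definition config :: "('f \<Rightarrow> 'f \<Rightarrow> bool) \<Rightarrow> 'f event set \<Rightarrow> bool" where
  "config indep C \<longleftrightarrow> finite C \<and>
     (\<forall>e\<in>C. \<forall>e'. causes e' e \<longrightarrow> e' \<in> C) \<and>
     (\<forall>a\<in>C. \<forall>b\<in>C. \<not> conflict indep a b)"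

definition config_of :: "('f \<Rightarrow> 'f \<Rightarrow> bool) \<Rightarrow> 'f event set \<Rightarrow> 'f event set \<Rightarrow> bool" where
  "config_of indep E C \<longleftrightarrow> C \<subseteq> E \<and> config indep C"

definition maximal :: "'f event set \<Rightarrow> 'f event set" where
  "maximal C = {e \<in> C. \<not> (\<exists>e''\<in>C. causes e e'')}"

definition inter :: "'f event set \<Rightarrow> 'f list set" where
  "inter C = {map lab es | es. distinct es \<and> set es = C \<and>
      (\<forall>i j. i < j \<and> j < length es \<longrightarrow> \<not> causes (es ! j) (es ! i))}"

definition conf_state :: "'d::lattice \<Rightarrow> ('d \<Rightarrow> 'd) event set \<Rightarrow> 'd" where
  "conf_state d0 C = Inf_fin (seq_state d0 ` inter C)"

text \<open>The unfolding: saturation of the event-adding construction, i.e. the least set closed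
  under adding events <f,C>.\<close>
inductive_set unf :: "('d::bounded_lattice_bot \<Rightarrow> 'd) set \<Rightarrow> (('d \<Rightarrow> 'd) \<Rightarrow> ('d \<Rightarrow> 'd) \<Rightarrow> bool)
    \<Rightarrow> 'd \<Rightarrow> ('d \<Rightarrow> 'd) event set"
  for F indep d0 where
  add: "(\<forall>e. e |\<in>| C \<longrightarrow> e \<in> unf F indep d0) \<Longrightarrow> config indep (fset C) \<Longrightarrow> f \<in> F \<Longrightarrow>
        f (conf_state d0 (fset C)) \<noteq> bot \<Longrightarrow>
        (\<forall>e\<in>maximal (fset C). \<not> indep f (lab e)) \<Longrightarrow> Ev f C \<in> unf F indep d0"

definition fc_spec :: "('d::lattice \<Rightarrow> 'd) event set \<Rightarrow> (('d \<Rightarrow> 'd) event set \<Rightarrow> ('d \<Rightarrow> 'd) event set \<Rightarrow> bool)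
    \<Rightarrow> 'd \<Rightarrow> (('d \<Rightarrow> 'd) event \<Rightarrow> bool) \<Rightarrow> (('d \<Rightarrow> 'd) event \<Rightarrow> bool) \<Rightarrow> bool" where
  "fc_spec U prec d0 feas ct \<longleftrightarrow>
     (\<forall>e. e \<notin> U \<longrightarrow> \<not> feas e \<and> \<not> ct e) \<and>
     (\<forall>e\<in>U. (feas e \<longleftrightarrow> (\<forall>e'. causes e' e \<longrightarrow> \<not> ct e')) \<and>
             (ct e \<longleftrightarrow> feas e \<and> (\<exists>e'\<in>U. feas e' \<and> prec (lconf e') (lconf e) \<and>
                                   conf_state d0 (lconf e) \<le> conf_state d0 (lconf e'))))"

definition feasible_prefix :: "('d::lattice \<Rightarrow> 'd) event set
    \<Rightarrow> (('d \<Rightarrow> 'd) event set \<Rightarrow> ('d \<Rightarrow> 'd) event set \<Rightarrow> bool) \<Rightarrow> 'd \<Rightarrow> ('d \<Rightarrow> 'd) event set" where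
  "feasible_prefix U prec d0 =
     (let p = (THE p. fc_spec U prec d0 (fst p) (snd p))
      in {e \<in> U. fst p e \<and> \<not> snd p e})"

definition size_ord :: "'e set \<Rightarrow> 'e set \<Rightarrow> bool" where
  "size_ord C C' \<longleftrightarrow> card C < card C'"

definition D_complete :: "('d::lattice \<Rightarrow> 'd) set \<Rightarrow> 'd \<Rightarrow> (('d \<Rightarrow> 'd) \<Rightarrow> ('d \<Rightarrow> 'd) \<Rightarrow> bool)
    \<Rightarrow> ('d \<Rightarrow> 'd) event set \<Rightarrow> bool" where
  "D_complete F d0 indep E \<longleftrightarrow>
     (\<forall>d\<in>reach F d0. \<exists>C. config_of indep E C \<and> d \<le> conf_state d0 C)"

end

theory Submission
  imports Defs
begin

text \<open>Given a reachable \<open>d\<close>, fix a shortest trace \<open>\<sigma>\<close> with \<open>d \<sqsubseteq> state(\<sigma>)\<close> and turn it into a run: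
  a configuration of the unfolding whose events are labelled by \<open>\<sigma>\<close>, each event being caused
  by the earlier events whose labels it does not commute with. Concurrent events of the run carry
  weakly independent labels, so every linearization of the run reaches \<open>state(\<sigma>)\<close>, and every
  event is enabled. If an event \<open>e\<close> of the run were a cutoff with witness \<open>e'\<close>, then executing
  \<open>[e']\<close> followed by the events of the run outside \<open>[e]\<close> would be a trace shorter than \<open>\<sigma>\<close>
  whose state, by monotonicity, still dominates \<open>state(\<sigma>)\<close>. Hence the run is cutoff-free and
  lies in the feasible prefix.\<close>

section \<open>Traces\<close>

lemma seq_state_Nil [simp]: "seq_state d [] = d"
  by (simp add: seq_state_def)

lemma seq_state_Cons [simp]: "seq_state d (f # fs) = seq_state (f d) fs"
  by (simp add: seq_state_def)

lemma seq_state_append [simp]: "seq_state d (fs @ gs) = seq_state (seq_state d fs) gs"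
  by (simp add: seq_state_def)

lemma seq_state_mono:
  "\<forall>f\<in>set fs. mono f \<Longrightarrow> (a::'a::order) \<le> b \<Longrightarrow> seq_state a fs \<le> seq_state b fs"
  by (induction fs arbitrary: a b) (auto simp: mono_def)

lemma seq_state_bot: "\<forall>f\<in>set fs. f bot = bot \<Longrightarrow> seq_state bot fs = bot"
  by (induction fs) auto

lemma reach_initial: "d0 \<in> reach F d0"
  unfolding reach_def by (auto intro!: exI[of _ "[]"])

lemma reach_seq_state:
  assumes "d \<in> reach F d0" and "set fs \<subseteq> F"
  shows "seq_state d fs \<in> reach F d0"
proof -
  obtain \<sigma> where "set \<sigma> \<subseteq> F" and "d = seq_state d0 \<sigma>"
    using assms(1) unfolding reach_def by blast
  then show ?thesis
    using assms(2) unfolding reach_def by (auto intro!: exI[of _ "\<sigma> @ fs"])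
qed

lemma seq_state_indep_commute:
  assumes wi: "weak_indep F d0 indep" and "d \<in> reach F d0" and "\<forall>g\<in>set gs. indep f g"
  shows "seq_state (f d) gs = f (seq_state d gs)"
  using assms(2,3)
proof (induction gs arbitrary: d)
  case (Cons g gs)
  have "indep f g" using Cons.prems by simp
  then have "g \<in> F" and "f (g d) = g (f d)"
    using wi Cons.prems(1) unfolding weak_indep_def by blast+
  moreover have "g d \<in> reach F d0"
    using reach_seq_state[OF Cons.prems(1), of "[g]"] \<open>g \<in> F\<close> by simp
  ultimately show ?case using Cons.IH[of "g d"] Cons.prems(2) by simp
qed simp

lemma shortest_trace:
  fixes d :: "'a::preorder"
  assumes "d \<in> reach F d0"
  obtains \<sigma> where "set \<sigma> \<subseteq> F" and "d \<le> seq_state d0 \<sigma>"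
    and "\<And>\<sigma>'. set \<sigma>' \<subseteq> F \<Longrightarrow> d \<le> seq_state d0 \<sigma>' \<Longrightarrow> length \<sigma> \<le> length \<sigma>'"
proof -
  let ?P = "\<lambda>\<sigma>. set \<sigma> \<subseteq> F \<and> d \<le> seq_state d0 \<sigma>"
  obtain \<sigma>0 where "set \<sigma>0 \<subseteq> F" and "d = seq_state d0 \<sigma>0"
    using assms unfolding reach_def by blast
  then have "?P \<sigma>0" by simp
  from ex_has_least_nat[of ?P, OF this, of length] obtain \<sigma>
    where "?P \<sigma>" and "\<forall>\<sigma>'. ?P \<sigma>' \<longrightarrow> length \<sigma> \<le> length \<sigma>'" by blast
  then show thesis using that by blast
qed

section \<open>Linearizations\<close>

definition linearization :: "'f event list \<Rightarrow> 'f event set \<Rightarrow> bool" where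
  "linearization es S \<longleftrightarrow> distinct es \<and> set es = S \<and> sorted_wrt (\<lambda>a b. \<not> causes b a) es"

definition causally_closed :: "'f event set \<Rightarrow> bool" where
  "causally_closed S \<longleftrightarrow> (\<forall>e\<in>S. \<forall>x. causes x e \<longrightarrow> x \<in> S)"

definition concurrent_indep :: "('f \<Rightarrow> 'f \<Rightarrow> bool) \<Rightarrow> 'f event set \<Rightarrow> bool" where
  "concurrent_indep indep S \<longleftrightarrow>
     (\<forall>a\<in>S. \<forall>b\<in>S. a \<noteq> b \<and> \<not> causes a b \<and> \<not> causes b a \<longrightarrow> indep (lab a) (lab b))"

lemma concurrent_indep_subset: "concurrent_indep indep S \<Longrightarrow> T \<subseteq> S \<Longrightarrow> concurrent_indep indep T"
  unfolding concurrent_indep_def by blast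

lemma inter_eq_linearizations: "inter C = map lab ` {es. linearization es C}"
  unfolding inter_def linearization_def sorted_wrt_iff_nth_less by auto

lemma linearization_filter:
  "linearization es S \<Longrightarrow> linearization (filter P es) {x \<in> S. P x}"
  unfolding linearization_def by (auto simp: sorted_wrt_filter)

lemma linearization_split:
  assumes "linearization es S" and "\<And>x z. x \<in> S \<Longrightarrow> P x \<Longrightarrow> causes z x \<Longrightarrow> P z"
  shows "linearization (filter P es @ filter (\<lambda>x. \<not> P x) es) S"
  using assms unfolding linearization_def sorted_wrt_append by (auto simp: sorted_wrt_filter)

lemma config_if_concurrent_indep:
  assumes "finite S" and "causally_closed S" and "concurrent_indep indep S"
  shows "config indep S"
  unfolding config_def
proof (intro conjI ballI)
  show "\<forall>x. causes x e \<longrightarrow> x \<in> S" if "e \<in> S" for e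
    using assms(2) that unfolding causally_closed_def by blast
  show "\<not> conflict indep a b" if "a \<in> S" and "b \<in> S" for a b
  proof
    assume "conflict indep a b"
    then obtain a' b' where "a' = a \<or> causes a' a" "b' = b \<or> causes b' b"
      and "direct_conflict indep a' b'"
      unfolding conflict_def by blast
    moreover from this(1,2) have "a' \<in> S" "b' \<in> S"
      using that assms(2) unfolding causally_closed_def by blast+
    ultimately show False using assms(3) unfolding concurrent_indep_def direct_conflict_def by blast
  qed
qed (fact assms(1))

text \<open>The head of the first linearization is moved to the front of the second one, past events
  concurrent to it.\<close>
lemma seq_state_linearizations_eq:
  assumes wi: "weak_indep F d0 indep" and "concurrent_indep indep S" and "lab ` S \<subseteq> F"
    and "linearization es1 S" and "linearization es2 S" and "d \<in> reach F d0"
  shows "seq_state d (map lab es1) = seq_state d (map lab es2)"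
  using assms(2-)
proof (induction es1 arbitrary: es2 S d)
  case Nil
  then show ?case by (simp add: linearization_def)
next
  case (Cons x es1)
  from Cons.prems(3,4) have "x \<in> set es2" and "x \<notin> set es1"
    unfolding linearization_def by auto
  then obtain ys zs where es2: "es2 = ys @ x # zs" by (meson split_list)
  have "indep (lab x) (lab y)" if "y \<in> set ys" for y
  proof -
    have "y \<noteq> x" and "\<not> causes x y"
      using Cons.prems(4) that unfolding es2 linearization_def sorted_wrt_append by auto
    moreover have "y \<in> set es1" and "\<not> causes y x"
      using Cons.prems(3,4) that \<open>y \<noteq> x\<close> unfolding es2 linearization_def by auto
    ultimately show ?thesis
      using Cons.prems(1,3,4) that unfolding concurrent_indep_def linearization_def es2 by auto
  qed
  then have "seq_state d (map lab es2) = seq_state (lab x d) (map lab (ys @ zs))"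
    using seq_state_indep_commute[OF wi Cons.prems(5), where f="lab x" and gs="map lab ys"]
    by (simp add: es2)
  moreover have "linearization es1 (S - {x})"
    using Cons.prems(3) unfolding linearization_def by auto
  moreover have "linearization (ys @ zs) (S - {x})"
    using Cons.prems(4) unfolding es2 linearization_def sorted_wrt_append by auto
  moreover have "lab x d \<in> reach F d0"
    using reach_seq_state[OF Cons.prems(5), of "[lab x]"] Cons.prems(2,3)
    unfolding linearization_def by auto
  moreover have "concurrent_indep indep (S - {x})" and "lab ` (S - {x}) \<subseteq> F"
    using concurrent_indep_subset[OF Cons.prems(1)] Cons.prems(2) by auto
  ultimately show ?case
    using Cons.IH[of "S - {x}" "ys @ zs" "lab x d"] by simp
qed

lemma conf_state_eq_linearization:
  assumes "weak_indep F d0 indep" and "concurrent_indep indep C" and "lab ` C \<subseteq> F"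
    and "linearization es C"
  shows "conf_state d0 C = seq_state d0 (map lab es)"
proof -
  have "seq_state d0 ` inter C = {seq_state d0 (map lab es)}"
    using seq_state_linearizations_eq[OF assms(1-3) _ assms(4) reach_initial] assms(4)
    unfolding inter_eq_linearizations by blast
  then show ?thesis unfolding conf_state_def by simp
qed

lemma finite_inter: "finite C \<Longrightarrow> finite (inter C)"
  by (rule finite_subset[of _ "map lab ` {es. set es \<subseteq> C \<and> distinct es}"])
    (auto simp: inter_eq_linearizations linearization_def finite_subset_distinct)

lemma conf_state_le_linearization:
  assumes "finite C" and "linearization es C"
  shows "conf_state d0 C \<le> seq_state d0 (map lab es)"
  unfolding conf_state_def
proof (rule Inf_fin.coboundedI)
  show "finite (seq_state d0 ` inter C)" using finite_inter[OF assms(1)] by simp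
  show "seq_state d0 (map lab es) \<in> seq_state d0 ` inter C"
    using assms(2) unfolding inter_eq_linearizations by blast
qed

section \<open>The unfolding\<close>

lemma not_causes_self: "\<not> causes e e"
proof (induction e)
  case (Ev f C)
  then show ?case unfolding causes_def by (metis event.sel(2))
qed

lemma unf_lab: "e \<in> unf F indep d0 \<Longrightarrow> lab e \<in> F"
  by (cases rule: unf.cases) auto

lemma unf_causes: "e \<in> unf F indep d0 \<Longrightarrow> causes x e \<Longrightarrow> x \<in> unf F indep d0"
  by (cases rule: unf.cases) (auto simp: causes_def)

lemma unf_causes_trans:
  assumes "e \<in> unf F indep d0" and "causes a e" and "causes z a"
  shows "causes z e"
  using assms by (cases rule: unf.cases) (auto simp: causes_def config_def)

lemma finite_lconf: "finite (lconf e)"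
  unfolding lconf_def by simp

lemma unf_lconf_subset: "e \<in> unf F indep d0 \<Longrightarrow> lconf e \<subseteq> unf F indep d0"
  using unf_causes unfolding lconf_def causes_def by blast

lemma causally_closed_lconf: "e \<in> unf F indep d0 \<Longrightarrow> causally_closed (lconf e)"
  using unf_causes_trans unfolding causally_closed_def lconf_def causes_def by blast

definition level :: "'f event \<Rightarrow> nat" where
  "level e = card (lconf e)"

lemma level_less_if_causes:
  assumes "e \<in> unf F indep d0" and "causes a e"
  shows "level a < level e"
proof -
  have "lconf a \<subseteq> fset (hist e)"
    using unf_causes_trans[OF assms] assms(2) unfolding lconf_def causes_def by blast
  moreover have "e \<notin> fset (hist e)" using not_causes_self[of e] unfolding causes_def by simp
  ultimately show ?thesis
    unfolding level_def lconf_def by (simp add: card_mono le_imp_less_Suc)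
qed

lemma linearization_exists:
  assumes "finite S" and "S \<subseteq> unf F indep d0"
  obtains es where "linearization es S"
proof -
  obtain xs where xs: "set xs = S" using finite_list[OF assms(1)] by blast
  define es where "es = sort_key level (remdups xs)"
  have "sorted_wrt (\<lambda>a b. level a \<le> level b) es"
    using sorted_sort_key[of level "remdups xs"] unfolding es_def by (simp add: sorted_wrt_map)
  then have "sorted_wrt (\<lambda>a b. \<not> causes b a) es"
    by (rule sorted_wrt_mono_rel[rotated])
      (use assms(2) xs level_less_if_causes in \<open>fastforce simp: es_def\<close>)
  then have "linearization es S" unfolding linearization_def es_def using xs by simp
  then show thesis by (rule that)
qed

section \<open>Feasible prefixes of size-increasing strategies\<close>

text \<open>Feasibility and cutoffs are given by a mutual recursion along causality and the strategy.
  When the strategy strictly increases the size of configurations, both recursive references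
  descend in level, so the status of all events can be fixed level by level: stage \<open>n\<close>
  settles every event of level below \<open>n\<close>.\<close>
primrec fc_stage :: "('d::lattice \<Rightarrow> 'd) event set
    \<Rightarrow> (('d \<Rightarrow> 'd) event set \<Rightarrow> ('d \<Rightarrow> 'd) event set \<Rightarrow> bool) \<Rightarrow> 'd \<Rightarrow> nat
    \<Rightarrow> (('d \<Rightarrow> 'd) event \<Rightarrow> bool) \<times> (('d \<Rightarrow> 'd) event \<Rightarrow> bool)" where
  "fc_stage U prec d0 0 = (\<lambda>_. False, \<lambda>_. False)"
| "fc_stage U prec d0 (Suc n) =
    (let feas = fst (fc_stage U prec d0 n); ct = snd (fc_stage U prec d0 n);
         feas' = (\<lambda>e. if level e = n then e \<in> U \<and> (\<forall>e'. causes e' e \<longrightarrow> \<not> ct e') else feas e)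
     in (feas', \<lambda>e. if level e = n
                   then feas' e \<and> (\<exists>e'\<in>U. feas e' \<and> prec (lconf e') (lconf e) \<and>
                          conf_state d0 (lconf e) \<le> conf_state d0 (lconf e'))
                   else ct e))"

lemma fc_stage_stable:
  "level e < n \<Longrightarrow> fc_stage U prec d0 n = p \<Longrightarrow>
     fst p e = fst (fc_stage U prec d0 (Suc (level e))) e \<and>
     snd p e = snd (fc_stage U prec d0 (Suc (level e))) e"
proof (induction n arbitrary: p)
  case (Suc n)
  then show ?case
    by (cases "level e = n") (auto simp: Let_def dest: Suc.IH[OF _ refl])
qed simp

lemma fc_spec_fc_stage:
  assumes U: "U = unf F indep d0" and prec: "\<And>C C'. prec C C' \<Longrightarrow> card C < card C'"
  shows "fc_spec U prec d0 (\<lambda>e. fst (fc_stage U prec d0 (Suc (level e))) e)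
                            (\<lambda>e. snd (fc_stage U prec d0 (Suc (level e))) e)"
proof -
  define feas where "feas = (\<lambda>e. fst (fc_stage U prec d0 (Suc (level e))) e)"
  define ct where "ct = (\<lambda>e. snd (fc_stage U prec d0 (Suc (level e))) e)"
  have below: "fst (fc_stage U prec d0 (level e)) e' = feas e'"
    "snd (fc_stage U prec d0 (level e)) e' = ct e'" if "level e' < level e" for e e'
    using fc_stage_stable[OF that refl] unfolding feas_def ct_def by blast+
  have feas_eq: "feas e \<longleftrightarrow> e \<in> U \<and> (\<forall>e'. causes e' e \<longrightarrow> \<not> ct e')" for e
  proof -
    have "feas e \<longleftrightarrow> e \<in> U \<and> (\<forall>e'. causes e' e \<longrightarrow> \<not> snd (fc_stage U prec d0 (level e)) e')"
      by (simp add: feas_def Let_def)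
    also have "\<dots> \<longleftrightarrow> e \<in> U \<and> (\<forall>e'. causes e' e \<longrightarrow> \<not> ct e')"
      using below(2) level_less_if_causes unfolding U by blast
    finally show ?thesis .
  qed
  have ct_eq: "ct e \<longleftrightarrow> feas e \<and> (\<exists>e'\<in>U. feas e' \<and> prec (lconf e') (lconf e) \<and>
                          conf_state d0 (lconf e) \<le> conf_state d0 (lconf e'))" for e
  proof -
    have "ct e \<longleftrightarrow> feas e \<and> (\<exists>e'\<in>U. fst (fc_stage U prec d0 (level e)) e' \<and>
            prec (lconf e') (lconf e) \<and> conf_state d0 (lconf e) \<le> conf_state d0 (lconf e'))"
      by (simp add: ct_def feas_def Let_def)
    also have "\<dots> \<longleftrightarrow> feas e \<and> (\<exists>e'\<in>U. feas e' \<and> prec (lconf e') (lconf e) \<and>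
                          conf_state d0 (lconf e) \<le> conf_state d0 (lconf e'))"
      using below(1) prec unfolding level_def by blast
    finally show ?thesis .
  qed
  show ?thesis
    unfolding fc_spec_def feas_def[symmetric] ct_def[symmetric] using feas_eq ct_eq by blast
qed

lemma fc_spec_unique:
  assumes U: "U = unf F indep d0" and prec: "\<And>C C'. prec C C' \<Longrightarrow> card C < card C'"
    and spec1: "fc_spec U prec d0 feas1 ct1" and spec2: "fc_spec U prec d0 feas2 ct2"
  shows "feas1 = feas2 \<and> ct1 = ct2"
proof -
  have "feas1 e = feas2 e \<and> ct1 e = ct2 e" for e
  proof (induction "level e" arbitrary: e rule: less_induct)
    case less
    show ?case
    proof (cases "e \<in> U")
      case False
      then show ?thesis using spec1 spec2 unfolding fc_spec_def by blast
    next
      case True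
      have below: "feas1 e' = feas2 e'" "ct1 e' = ct2 e'" if "level e' < level e" for e'
        using less that by blast+
      from spec1 spec2 True
      have feas: "feas1 e \<longleftrightarrow> (\<forall>e'. causes e' e \<longrightarrow> \<not> ct1 e')"
          "feas2 e \<longleftrightarrow> (\<forall>e'. causes e' e \<longrightarrow> \<not> ct2 e')"
        and ct: "ct1 e \<longleftrightarrow> feas1 e \<and> (\<exists>e'\<in>U. feas1 e' \<and> prec (lconf e') (lconf e) \<and>
                           conf_state d0 (lconf e) \<le> conf_state d0 (lconf e'))"
          "ct2 e \<longleftrightarrow> feas2 e \<and> (\<exists>e'\<in>U. feas2 e' \<and> prec (lconf e') (lconf e) \<and>
                           conf_state d0 (lconf e) \<le> conf_state d0 (lconf e'))"
        unfolding fc_spec_def by blast+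
      have "feas1 e = feas2 e"
        unfolding feas using below(2) level_less_if_causes True unfolding U by blast
      moreover have "ct1 e = ct2 e"
        unfolding ct using calculation below(1) prec unfolding level_def by blast
      ultimately show ?thesis ..
    qed
  qed
  then show ?thesis by blast
qed

lemma feasible_prefix_unf:
  assumes "\<And>C C'. prec C C' \<Longrightarrow> card C < card C'"
  obtains feas ct where "fc_spec (unf F indep d0) prec d0 feas ct"
    and "feasible_prefix (unf F indep d0) prec d0 = {e \<in> unf F indep d0. feas e \<and> \<not> ct e}"
proof -
  let ?U = "unf F indep d0"
  define p where "p = (\<lambda>e. fst (fc_stage ?U prec d0 (Suc (level e))) e,
                       \<lambda>e. snd (fc_stage ?U prec d0 (Suc (level e))) e)"
  have "fc_spec ?U prec d0 (fst p) (snd p)"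
    using fc_spec_fc_stage[OF refl assms] by (simp add: p_def)
  moreover have "q = p" if "fc_spec ?U prec d0 (fst q) (snd q)" for q
    using fc_spec_unique[OF refl assms that calculation] by (simp add: prod_eq_iff)
  ultimately have "\<exists>!p. fc_spec ?U prec d0 (fst p) (snd p)" by blast
  from theI'[OF this] show thesis
    by (rule that) (simp add: feasible_prefix_def Let_def)
qed

lemma causally_closed_subset_feasible:
  assumes "fc_spec U prec d0 feas ct" and "S \<subseteq> U" and "causally_closed S" and "\<forall>e\<in>S. \<not> ct e"
  shows "S \<subseteq> {e \<in> U. feas e \<and> \<not> ct e}"
  using assms unfolding fc_spec_def causally_closed_def by blast

section \<open>Runs of traces\<close>

definition dependent_past :: "('f \<Rightarrow> 'f \<Rightarrow> bool) \<Rightarrow> 'f event list \<Rightarrow> 'f \<Rightarrow> 'f event \<Rightarrow> bool" where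
  "dependent_past indep es f x \<longleftrightarrow> (\<exists>y\<in>set es. \<not> indep f (lab y) \<and> (x = y \<or> causes x y))"

definition run_extend :: "('f \<Rightarrow> 'f \<Rightarrow> bool) \<Rightarrow> 'f event list \<Rightarrow> 'f \<Rightarrow> 'f event list" where
  "run_extend indep es f = es @ [Ev f (fset_of_list (filter (dependent_past indep es f) es))]"

definition run_of :: "('f \<Rightarrow> 'f \<Rightarrow> bool) \<Rightarrow> 'f list \<Rightarrow> 'f event list" where
  "run_of indep \<sigma> = foldl (run_extend indep) [] \<sigma>"

locale weak_analysis =
  fixes F :: "('d::bounded_lattice_bot \<Rightarrow> 'd) set" and d0 :: 'd
    and indep :: "('d \<Rightarrow> 'd) \<Rightarrow> ('d \<Rightarrow> 'd) \<Rightarrow> bool"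
  assumes analysis_instance: "analysis_instance F"
    and weak_indep: "weak_indep F d0 indep"
begin

definition valid_run :: "('d \<Rightarrow> 'd) event list \<Rightarrow> bool" where
  "valid_run es \<longleftrightarrow> linearization es (set es) \<and> set es \<subseteq> unf F indep d0 \<and>
     causally_closed (set es) \<and> concurrent_indep indep (set es)"

lemma valid_run_lab: "valid_run es \<Longrightarrow> lab ` set es \<subseteq> F"
  unfolding valid_run_def using unf_lab by blast

lemma conf_state_valid_run:
  "valid_run es \<Longrightarrow> conf_state d0 (set es) = seq_state d0 (map lab es)"
  using conf_state_eq_linearization[OF weak_indep] valid_run_lab unfolding valid_run_def by blast

lemma seq_state_valid_run_reorder:
  "valid_run es \<Longrightarrow> linearization es' (set es) \<Longrightarrow>
     seq_state d0 (map lab es) = seq_state d0 (map lab es')"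
  using seq_state_linearizations_eq[OF weak_indep _ _ _ _ reach_initial] valid_run_lab
  unfolding valid_run_def by blast

lemma causally_closed_dependent_past:
  assumes "valid_run es"
  shows "causally_closed {x \<in> set es. dependent_past indep es f x}"
  unfolding causally_closed_def
proof (intro ballI allI impI)
  fix x z assume "x \<in> {x \<in> set es. dependent_past indep es f x}" and "causes z x"
  then obtain y where "y \<in> set es" "\<not> indep f (lab y)" "x = y \<or> causes x y" and "x \<in> set es"
    unfolding dependent_past_def by blast
  moreover from this have "causes z y"
    using \<open>causes z x\<close> unf_causes_trans assms unfolding valid_run_def by blast
  moreover have "z \<in> set es"
    using assms \<open>x \<in> set es\<close> \<open>causes z x\<close> unfolding valid_run_def causally_closed_def by blast
  ultimately show "z \<in> {x \<in> set es. dependent_past indep es f x}"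
    unfolding dependent_past_def by blast
qed

text \<open>The events outside the dependent past all commute with \<open>f\<close>, so \<open>f\<close> can be moved in front
  of them; by strictness it is then already enabled at the state of the dependent past.\<close>
lemma dependent_past_enabled:
  assumes run: "valid_run es" and "f \<in> F" and enabled: "f (seq_state d0 (map lab es)) \<noteq> bot"
  shows "f (conf_state d0 {x \<in> set es. dependent_past indep es f x}) \<noteq> bot"
proof -
  let ?P = "dependent_past indep es f"
  define hs where "hs = filter ?P es"
  define rs where "rs = filter (\<lambda>x. \<not> ?P x) es"
  define d where "d = seq_state d0 (map lab hs)"
  have lin: "linearization es (set es)" using run unfolding valid_run_def by blast
  have split: "linearization (hs @ rs) (set es)"
    unfolding hs_def rs_def
  proof (rule linearization_split[OF lin])
    fix x z assume "x \<in> set es" and "?P x" and "causes z x"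
    then show "?P z"
      using causally_closed_dependent_past[OF run] unfolding causally_closed_def by blast
  qed
  have "seq_state d0 (map lab es) = seq_state d (map lab rs)"
    using seq_state_valid_run_reorder[OF run split] by (simp add: d_def)
  also have "f \<dots> = seq_state (f d) (map lab rs)"
  proof -
    have "d \<in> reach F d0"
      using reach_seq_state[OF reach_initial, of "map lab hs"] valid_run_lab[OF run]
      unfolding d_def hs_def by auto
    moreover have "\<forall>g\<in>set (map lab rs). indep f g"
      unfolding rs_def dependent_past_def by auto
    ultimately show ?thesis by (rule seq_state_indep_commute[OF weak_indep, symmetric])
  qed
  finally have "f (seq_state d0 (map lab es)) = seq_state (f d) (map lab rs)" .
  moreover have "seq_state bot (map lab rs) = bot"
    using valid_run_lab[OF run] analysis_instance unfolding analysis_instance_def rs_def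
    by (intro seq_state_bot) auto
  ultimately have "f d \<noteq> bot" using enabled by force
  moreover have "conf_state d0 {x \<in> set es. ?P x} = d"
    unfolding d_def
  proof (rule conf_state_eq_linearization[OF weak_indep])
    show "concurrent_indep indep {x \<in> set es. ?P x}"
      using run unfolding valid_run_def by (auto intro: concurrent_indep_subset)
    show "lab ` {x \<in> set es. ?P x} \<subseteq> F" using valid_run_lab[OF run] by blast
    show "linearization hs {x \<in> set es. ?P x}" using linearization_filter[OF lin] by (simp add: hs_def)
  qed
  ultimately show ?thesis by simp
qed

lemma run_extend_event_unf:
  assumes run: "valid_run es" and "f \<in> F" and enabled: "f (seq_state d0 (map lab es)) \<noteq> bot"
  shows "Ev f (fset_of_list (filter (dependent_past indep es f) es)) \<in> unf F indep d0"
proof (rule unf.add)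
  let ?D = "{x \<in> set es. dependent_past indep es f x}"
  have hist: "fset (fset_of_list (filter (dependent_past indep es f) es)) = ?D"
    by (auto simp: fset_of_list.rep_eq)
  show "\<forall>x. x |\<in>| fset_of_list (filter (dependent_past indep es f) es) \<longrightarrow> x \<in> unf F indep d0"
    using run unfolding valid_run_def by (auto simp: fset_of_list_elem)
  have "concurrent_indep indep ?D"
    using run unfolding valid_run_def by (auto intro: concurrent_indep_subset)
  then show "config indep (fset (fset_of_list (filter (dependent_past indep es f) es)))"
    unfolding hist using config_if_concurrent_indep[OF _ causally_closed_dependent_past[OF run]]
    by simp
  show "f (conf_state d0 (fset (fset_of_list (filter (dependent_past indep es f) es)))) \<noteq> bot"
    unfolding hist by (rule dependent_past_enabled[OF assms])
  show "\<forall>x\<in>maximal (fset (fset_of_list (filter (dependent_past indep es f) es))).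
          \<not> indep f (lab x)"
    unfolding hist maximal_def dependent_past_def by auto
qed (fact \<open>f \<in> F\<close>)

lemma valid_run_extend:
  assumes run: "valid_run es" and "f \<in> F" and enabled: "f (seq_state d0 (map lab es)) \<noteq> bot"
  shows "valid_run (run_extend indep es f)"
proof -
  let ?P = "dependent_past indep es f"
  define e where "e = Ev f (fset_of_list (filter ?P es))"
  have causes_e: "causes x e \<longleftrightarrow> x \<in> set es \<and> ?P x" for x
    unfolding e_def causes_def by (auto simp: fset_of_list_elem)
  have "e \<notin> set es"
  proof
    assume "e \<in> set es"
    moreover have "\<not> indep f f" using weak_indep unfolding weak_indep_def by blast
    ultimately have "?P e" unfolding dependent_past_def by (intro bexI[of _ e]) (simp_all add: e_def)
    then show False using causes_e not_causes_self \<open>e \<in> set es\<close> by blast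
  qed
  have not_causes_run: "\<not> causes e x" if "x \<in> set es" for x
    using \<open>e \<notin> set es\<close> run that unfolding valid_run_def causally_closed_def by blast
  have indep_e: "indep (lab e) (lab x)" and indep_e_sym: "indep (lab x) (lab e)"
    if "x \<in> set es" and "\<not> causes x e" for x
  proof -
    show "indep (lab e) (lab x)"
      using that unfolding causes_e dependent_past_def by (auto simp: e_def)
    then show "indep (lab x) (lab e)" using weak_indep unfolding weak_indep_def by blast
  qed
  show ?thesis
    unfolding valid_run_def run_extend_def e_def[symmetric]
  proof (intro conjI)
    show "linearization (es @ [e]) (set (es @ [e]))"
      using run \<open>e \<notin> set es\<close> not_causes_run
      unfolding valid_run_def linearization_def sorted_wrt_append by auto
    show "set (es @ [e]) \<subseteq> unf F indep d0"
      using run run_extend_event_unf[OF assms] unfolding valid_run_def e_def by auto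
    show "causally_closed (set (es @ [e]))"
      using run causes_e unfolding valid_run_def causally_closed_def by auto
    show "concurrent_indep indep (set (es @ [e]))"
      using run indep_e indep_e_sym unfolding valid_run_def concurrent_indep_def by auto
  qed
qed

lemma valid_run_of:
  "set \<sigma> \<subseteq> F \<Longrightarrow> seq_state d0 \<sigma> \<noteq> bot \<Longrightarrow>
     valid_run (run_of indep \<sigma>) \<and> map lab (run_of indep \<sigma>) = \<sigma>"
proof (induction \<sigma> rule: rev_induct)
  case Nil
  show ?case
    by (simp add: run_of_def valid_run_def linearization_def causally_closed_def concurrent_indep_def)
next
  case (snoc f \<sigma>)
  have "f \<in> F" and "set \<sigma> \<subseteq> F" and enabled: "f (seq_state d0 \<sigma>) \<noteq> bot"
    using snoc.prems by auto
  moreover have "seq_state d0 \<sigma> \<noteq> bot"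
    using enabled \<open>f \<in> F\<close> analysis_instance unfolding analysis_instance_def by auto
  ultimately have "valid_run (run_of indep \<sigma>)" and "map lab (run_of indep \<sigma>) = \<sigma>"
    using snoc.IH by auto
  then show ?case
    using valid_run_extend[of "run_of indep \<sigma>" f] \<open>f \<in> F\<close> enabled
    by (simp add: run_of_def run_extend_def)
qed

lemma lconf_subset_valid_run: "valid_run es \<Longrightarrow> e \<in> set es \<Longrightarrow> lconf e \<subseteq> set es"
  unfolding valid_run_def causally_closed_def lconf_def causes_def by auto

lemma seq_state_valid_run_split_lconf:
  assumes run: "valid_run es" and "e \<in> set es"
  shows "seq_state d0 (map lab es) =
           seq_state (conf_state d0 (lconf e)) (map lab (filter (\<lambda>x. x \<notin> lconf e) es))"
proof -
  let ?L = "lconf e"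
  define ls where "ls = filter (\<lambda>x. x \<in> ?L) es"
  have lin: "linearization es (set es)" and "e \<in> unf F indep d0"
    using run \<open>e \<in> set es\<close> unfolding valid_run_def by blast+
  have L_sub: "?L \<subseteq> set es" by (rule lconf_subset_valid_run[OF assms])
  have split: "linearization (ls @ filter (\<lambda>x. x \<notin> ?L) es) (set es)"
    unfolding ls_def
  proof (rule linearization_split[OF lin])
    fix x z assume "x \<in> set es" and "x \<in> ?L" and "causes z x"
    then show "z \<in> ?L"
      using causally_closed_lconf[OF \<open>e \<in> unf F indep d0\<close>] unfolding causally_closed_def by blast
  qed
  have "{x \<in> set es. x \<in> ?L} = ?L" using L_sub by blast
  then have "linearization ls ?L"
    using linearization_filter[OF lin, of "\<lambda>x. x \<in> ?L"] by (simp add: ls_def)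
  then have "conf_state d0 ?L = seq_state d0 (map lab ls)"
  proof (rule conf_state_eq_linearization[OF weak_indep, rotated 2])
    show "concurrent_indep indep ?L"
      using run L_sub unfolding valid_run_def by (auto intro: concurrent_indep_subset)
    show "lab ` ?L \<subseteq> F" using valid_run_lab[OF run] L_sub by blast
  qed
  then show ?thesis using seq_state_valid_run_reorder[OF run split] by simp
qed

lemma trace_exchange_lconf:
  assumes run: "valid_run es" and "e \<in> set es" and "e' \<in> unf F indep d0"
    and le: "conf_state d0 (lconf e) \<le> conf_state d0 (lconf e')"
  obtains \<sigma> where "set \<sigma> \<subseteq> F" and "seq_state d0 (map lab es) \<le> seq_state d0 \<sigma>"
    and "length \<sigma> + level e = length es + level e'"
proof -
  define rs where "rs = filter (\<lambda>x. x \<notin> lconf e) es"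
  obtain ls' where lin_ls': "linearization ls' (lconf e')"
    using linearization_exists[OF finite_lconf unf_lconf_subset[OF \<open>e' \<in> unf F indep d0\<close>]] .
  have rs_F: "set (map lab rs) \<subseteq> F" using valid_run_lab[OF run] by (auto simp: rs_def)
  have "seq_state d0 (map lab es) = seq_state (conf_state d0 (lconf e)) (map lab rs)"
    unfolding rs_def by (rule seq_state_valid_run_split_lconf[OF run \<open>e \<in> set es\<close>])
  also have "\<dots> \<le> seq_state (seq_state d0 (map lab ls')) (map lab rs)"
  proof (rule seq_state_mono)
    show "\<forall>g\<in>set (map lab rs). mono g"
      using rs_F analysis_instance unfolding analysis_instance_def by blast
    show "conf_state d0 (lconf e) \<le> seq_state d0 (map lab ls')"
      using le conf_state_le_linearization[OF finite_lconf lin_ls'] by (rule order_trans)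
  qed
  finally have "seq_state d0 (map lab es) \<le> seq_state d0 (map lab ls' @ map lab rs)" by simp
  moreover have "set (map lab ls' @ map lab rs) \<subseteq> F"
    using lin_ls' unf_lab[of _ F indep d0] unf_lconf_subset[OF \<open>e' \<in> unf F indep d0\<close>] rs_F
    unfolding linearization_def by auto
  moreover have "length (map lab ls' @ map lab rs) + level e = length es + level e'"
  proof -
    have "length ls' = level e'"
      using lin_ls' distinct_card unfolding linearization_def level_def by metis
    moreover have "length (filter (\<lambda>x. x \<in> lconf e) es) = level e"
      using lconf_subset_valid_run[OF run \<open>e \<in> set es\<close>] run
      unfolding valid_run_def linearization_def level_def
      by (simp add: distinct_length_filter Int_absorb2)
    ultimately show ?thesis using sum_length_filter_compl[of "\<lambda>x. x \<in> lconf e" es]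
      by (simp add: rs_def)
  qed
  ultimately show thesis using that by blast
qed

lemma shortest_run_cutoff_free:
  assumes run: "valid_run es"
    and shortest: "\<And>\<sigma>. set \<sigma> \<subseteq> F \<Longrightarrow> seq_state d0 (map lab es) \<le> seq_state d0 \<sigma> \<Longrightarrow>
                       length es \<le> length \<sigma>"
    and spec: "fc_spec (unf F indep d0) size_ord d0 feas ct" and "e \<in> set es"
  shows "\<not> ct e"
proof
  assume "ct e"
  moreover have "e \<in> unf F indep d0" using run \<open>e \<in> set es\<close> unfolding valid_run_def by blast
  ultimately obtain e' where e': "e' \<in> unf F indep d0" "size_ord (lconf e') (lconf e)"
    "conf_state d0 (lconf e) \<le> conf_state d0 (lconf e')"
    using spec unfolding fc_spec_def by meson
  obtain \<sigma> where "set \<sigma> \<subseteq> F" and "seq_state d0 (map lab es) \<le> seq_state d0 \<sigma>"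
    and "length \<sigma> + level e = length es + level e'"
    using trace_exchange_lconf[OF run \<open>e \<in> set es\<close> e'(1,3)] .
  moreover have "level e' < level e" using e'(2) by (simp add: size_ord_def level_def)
  ultimately show False using shortest by fastforce
qed

theorem D_complete_feasible_prefix_size_ord:
  "D_complete F d0 indep (feasible_prefix (unf F indep d0) size_ord d0)"
  unfolding D_complete_def
proof
  fix d assume "d \<in> reach F d0"
  obtain feas ct where spec: "fc_spec (unf F indep d0) size_ord d0 feas ct"
    and prefix: "feasible_prefix (unf F indep d0) size_ord d0 =
                   {e \<in> unf F indep d0. feas e \<and> \<not> ct e}"
    using feasible_prefix_unf[of size_ord] unfolding size_ord_def by blast
  show "\<exists>C. config_of indep (feasible_prefix (unf F indep d0) size_ord d0) C \<and>
            d \<le> conf_state d0 C"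
  proof (cases "d = bot")
    case True
    then show ?thesis by (intro exI[of _ "{}"]) (simp add: config_of_def config_def)
  next
    case False
    obtain \<sigma> where \<sigma>: "set \<sigma> \<subseteq> F" "d \<le> seq_state d0 \<sigma>"
      and shortest: "\<And>\<sigma>'. set \<sigma>' \<subseteq> F \<Longrightarrow> d \<le> seq_state d0 \<sigma>' \<Longrightarrow> length \<sigma> \<le> length \<sigma>'"
      using shortest_trace[OF \<open>d \<in> reach F d0\<close>] by blast
    define es where "es = run_of indep \<sigma>"
    have "seq_state d0 \<sigma> \<noteq> bot" using False \<sigma> by (auto simp: bot_unique)
    then have run: "valid_run es" and labels: "map lab es = \<sigma>"
      using valid_run_of \<sigma> unfolding es_def by blast+
    have "\<not> ct e" if "e \<in> set es" for e
    proof (rule shortest_run_cutoff_free[OF run _ spec that])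
      fix \<sigma>' assume "set \<sigma>' \<subseteq> F" and "seq_state d0 (map lab es) \<le> seq_state d0 \<sigma>'"
      moreover from this(2) have "d \<le> seq_state d0 \<sigma>'"
        using order_trans[OF \<sigma>(2)] labels by simp
      ultimately show "length es \<le> length \<sigma>'"
        using shortest labels length_map by metis
    qed
    then have "set es \<subseteq> feasible_prefix (unf F indep d0) size_ord d0"
      unfolding prefix
      by (intro causally_closed_subset_feasible[OF spec]) (use run in \<open>auto simp: valid_run_def\<close>)
    moreover have "config indep (set es)"
      by (rule config_if_concurrent_indep) (use run in \<open>auto simp: valid_run_def\<close>)
    moreover have "d \<le> conf_state d0 (set es)"
      using conf_state_valid_run[OF run] labels \<sigma> by simp
    ultimately show ?thesis unfolding config_of_def by blast
  qed
qed

end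

theorem theorem6:
  fixes F :: "('d::bounded_lattice_bot \<Rightarrow> 'd) set"
    and d0 :: 'd
    and indep :: "('d \<Rightarrow> 'd) \<Rightarrow> ('d \<Rightarrow> 'd) \<Rightarrow> bool"
  assumes "analysis_instance F"
    and "weak_indep F d0 indep"
  shows "D_complete F d0 indep (feasible_prefix (unf F indep d0) size_ord d0)"
proof -
  interpret weak_analysis F d0 indep using assms by unfold_locales
  show ?thesis by (rule D_complete_feasible_prefix_size_ord)
qed

end
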